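(* Let $0<\alpha,\beta<\tfrac12$ and $g\in C_b^1(M)$. The Lyapunov exponents of $B_g$ are $\log2$, $\log2$, $\log\alpha$ and $\log\beta$ at almost every point with respect to Lebesgue measure and with respect to the physical measure $\mu_g$.
   Context: $M=[0,1)\times\mathbb R$. $B_\alpha(x,y)=(2x,\alpha y)$ if $0\le x<\tfrac12$ and $(2x-1,\alpha y+1-\alpha)$ if $\tfrac12\le x<1$; likewise $B_\beta$. $C_b^1(M)$: $C^1$ functions on the interior of $M$ with bounded function and derivative. $B_g(x,y,z,w)=(B_\alpha(x,y),B_\beta(z,w)+(0,g(x,y)))$ on $M\times M\subset\mathbb R^4$; it is $C^1$ off the set where $x$ or $z$ is $0$ or a dyadic fraction, with derivative there the matrix with rows $(2,0,0,0)$, $(0,\alpha,0,0)$, $(0,0,2,0)$, $(g_x(x,y),g_y(x,y),0,\beta)$; Lyapunov exponents are computed from this piecewise derivative. $\mu_g=(h_g)_*\mu$ where $\mu=(\mathrm{Leb}\times\nu_\alpha)\times(\mathrm{Leb}\times\nu_\beta)$ on $A=[0,1)\times A_\alpha\times[0,1)\times A_\beta$ ($A_\alpha$ the Cantor set with $A_\alpha=\alpha A_\alpha\cup(\alpha A_\alpha+1-\alpha)$, $\nu_\alpha$ its Cantor measure with mass $1/2$ on each piece, similarly for $\beta$), and $h_g(x,y,z,w)=\big(x,y,z,w+\sum_{i\ge0}\beta^i g(B_\alpha^{-i-1}(x,y))\big)$ with $B_\alpha^{-1}(x,y)=(x/2,y/\alpha)$ if $y\le\tfrac12$, $((x+1)/2,(y-(1-\alpha))/\alpha)$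 if $y>\tfrac12$. *)

theory Defs
  imports "HOL-Probability.Probability"
begin

type_synonym pt = "(real \<times> real) \<times> (real \<times> real)"

definition intM :: "(real \<times> real) set" where
  "intM = {0<..<1} \<times> UNIV"

definition MM :: "pt set" where
  "MM = ({0..<1} \<times> UNIV) \<times> ({0..<1} \<times> UNIV)"

definition Cb1 :: "(real \<times> real \<Rightarrow> real) \<Rightarrow> (real \<times> real \<Rightarrow> real) \<Rightarrow> (real \<times> real \<Rightarrow> real) \<Rightarrow> bool" where
  "Cb1 g gx gy \<longleftrightarrow>
     (\<forall>p\<in>intM. (g has_derivative (\<lambda>(h, k). gx p * h + gy p * k)) (at p)) \<and>
     continuous_on intM gx \<and> continuous_on intM gy \<and>
     (\<exists>C. \<forall>p\<in>intM. \<bar>g p\<bar> \<le> C \<and> \<bar>gx p\<bar> \<le> C \<and> \<bar>gy p\<bar> \<le> C)"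

text \<open>g is only defined on the interior of M; we extend it by 0 (irrelevant on a null set).\<close>
definition gext :: "(real \<times> real \<Rightarrow> real) \<Rightarrow> real \<times> real \<Rightarrow> real" where
  "gext g p = (if p \<in> intM then g p else 0)"

definition Bmap :: "real \<Rightarrow> real \<times> real \<Rightarrow> real \<times> real" where
  "Bmap a = (\<lambda>(x, y). if x < 1/2 then (2*x, a*y) else (2*x - 1, a*y + 1 - a))"

definition Bmap_inv :: "real \<Rightarrow> real \<times> real \<Rightarrow> real \<times> real" where
  "Bmap_inv a = (\<lambda>(x, y). if y \<le> 1/2 then (x/2, y/a) else ((x+1)/2, (y - (1 - a))/a))"

definition Bg :: "real \<Rightarrow> real \<Rightarrow> (real \<times> real \<Rightarrow> real) \<Rightarrow> pt \<Rightarrow> pt" where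
  "Bg a b g = (\<lambda>(p, q). (Bmap a p, Bmap b q + (0, gext g p)))"

definition DBg :: "real \<Rightarrow> real \<Rightarrow> (real \<times> real \<Rightarrow> real) \<Rightarrow> (real \<times> real \<Rightarrow> real) \<Rightarrow> pt \<Rightarrow> pt \<Rightarrow> pt" where
  "DBg a b gx gy = (\<lambda>((x, y), _) ((u1, u2), (u3, u4)).
      ((2*u1, a*u2), (2*u3, gx (x, y) * u1 + gy (x, y) * u2 + b*u4)))"

fun tan_iter :: "(pt \<Rightarrow> pt) \<Rightarrow> (pt \<Rightarrow> pt \<Rightarrow> pt) \<Rightarrow> nat \<Rightarrow> pt \<Rightarrow> pt \<Rightarrow> pt" where
  "tan_iter F DF 0 p v = v"
| "tan_iter F DF (Suc n) p v = DF ((F ^^ n) p) (tan_iter F DF n p v)"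

definition lyap :: "(pt \<Rightarrow> pt) \<Rightarrow> (pt \<Rightarrow> pt \<Rightarrow> pt) \<Rightarrow> pt \<Rightarrow> pt \<Rightarrow> real" where
  "lyap F DF p v = lim (\<lambda>n. ln (norm (tan_iter F DF n p v)) / real n)"

definition has_lyap_spectrum :: "(pt \<Rightarrow> pt) \<Rightarrow> (pt \<Rightarrow> pt \<Rightarrow> pt) \<Rightarrow> pt \<Rightarrow> real multiset \<Rightarrow> bool" where
  "has_lyap_spectrum F DF p L \<longleftrightarrow>
     (\<forall>v. v \<noteq> 0 \<longrightarrow> convergent (\<lambda>n. ln (norm (tan_iter F DF n p v)) / real n)) \<and>
     (\<forall>c. dim {v. v = 0 \<or> lyap F DF p v \<le> c} = size (filter_mset (\<lambda>l. l \<le> c) L))"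

definition leb01 :: "real measure" where
  "leb01 = restrict_space lborel {0..<1}"

text \<open>Cantor measure nu_a on A_a (mass 1/2 on each of the two pieces, self-similar),
  realised as the law of sum_i (1-a) a^i eps_i with eps_i iid fair coin flips.\<close>
definition cantor_measure :: "real \<Rightarrow> real measure" where
  "cantor_measure a = distr (\<Pi>\<^sub>M i\<in>(UNIV :: nat set). measure_pmf (bernoulli_pmf (1/2))) lborel
      (\<lambda>\<omega>. \<Sum>i. (1 - a) * a ^ i * (if \<omega> i then 1 else 0))"

definition hg :: "real \<Rightarrow> real \<Rightarrow> (real \<times> real \<Rightarrow> real) \<Rightarrow> pt \<Rightarrow> pt" where
  "hg a b g = (\<lambda>(p, (z, w)). (p, (z, w + (\<Sum>i. b ^ i * gext g ((Bmap_inv a ^^ Suc i) p)))))"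

definition mu_g :: "real \<Rightarrow> real \<Rightarrow> (real \<times> real \<Rightarrow> real) \<Rightarrow> pt measure" where
  "mu_g a b g = distr ((leb01 \<Otimes>\<^sub>M cantor_measure a) \<Otimes>\<^sub>M (leb01 \<Otimes>\<^sub>M cantor_measure b)) lborel (hg a b g)"

end

theory Submission
  imports Defs "HOL-Real_Asymp.Real_Asymp"
begin

(* The derivative of B_g is lower block-triangular: it doubles both horizontal directions,
   contracts the vertical ones by \<alpha> and \<beta>, and couples them only through the fibre coordinate,
   which along an orbit obeys w(n+1) = G n 2^n u1 + H n \<alpha>^n u2 + \<beta> w n, where G, H are g_x, g_y
   along the B_\<alpha>-orbit of (x, y). If x is not dyadic that orbit stays in the interior of M, so
   G and H are bounded, and solving the recurrence gives the exponents: log 2 off the plane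
   u1 = u3 = 0; inside it max(log \<alpha>, log \<beta>), except on one line with min(log \<alpha>, log \<beta>) -- the
   w-axis if \<beta> \<le> \<alpha>, and otherwise the direction (0, 1, 0, -S), S = \<Sum>k (\<alpha>/\<beta>)^k H k / \<beta>, along
   which the \<beta>-growth of w cancels. Dyadic x form a Lebesgue null set, and since h_g fixes x,
   the x-marginal of \<mu>_g is Lebesgue measure on [0,1). *)

primrec fibre_seq ::
  "(nat \<Rightarrow> real) \<Rightarrow> (nat \<Rightarrow> real) \<Rightarrow> real \<Rightarrow> real \<Rightarrow> real \<Rightarrow> real \<Rightarrow> real \<Rightarrow> nat \<Rightarrow> real" where
  "fibre_seq G H a b u1 u2 u4 0 = u4"
| "fibre_seq G H a b u1 u2 u4 (Suc n) =
     G n * (2^n * u1) + H n * (a^n * u2) + b * fibre_seq G H a b u1 u2 u4 n"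

definition skew_cocycle :: "(nat \<Rightarrow> real) \<Rightarrow> (nat \<Rightarrow> real) \<Rightarrow> real \<Rightarrow> real \<Rightarrow> nat \<Rightarrow> pt \<Rightarrow> pt" where
  "skew_cocycle G H a b n v = (case v of ((u1, u2), (u3, u4)) \<Rightarrow>
     ((2^n * u1, a^n * u2), (2^n * u3, fibre_seq G H a b u1 u2 u4 n)))"

lemma fst_Bg_iter: "fst ((Bg a b g ^^ n) p) = (Bmap a ^^ n) (fst p)"
  by (induction n) (auto simp: Bg_def split: prod.splits)

lemma tan_iter_Bg_eq_skew_cocycle:
  "tan_iter (Bg a b g) (DBg a b gx gy) n p v =
     skew_cocycle (\<lambda>k. gx ((Bmap a ^^ k) (fst p))) (\<lambda>k. gy ((Bmap a ^^ k) (fst p))) a b n v"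
proof (induction n)
  case 0
  then show ?case by (auto simp: skew_cocycle_def split: prod.splits)
next
  case (Suc n)
  obtain x y where xy: "(Bmap a ^^ n) (fst p) = (x, y)" by fastforce
  then obtain q where "(Bg a b g ^^ n) p = ((x, y), q)"
    using fst_Bg_iter[of n a b g p] by (metis prod.collapse)
  with Suc xy show ?case by (auto simp: skew_cocycle_def DBg_def split: prod.splits)
qed

lemma norm_pt_le_sum_abs: "norm (((x1, x2), (x3, x4)) :: pt) \<le> \<bar>x1\<bar> + \<bar>x2\<bar> + \<bar>x3\<bar> + \<bar>x4\<bar>"
proof -
  have "norm (((x1, x2), (x3, x4)) :: pt) \<le> norm (x1, x2) + norm (x3, x4)" by (rule norm_Pair_le)
  also have "\<dots> \<le> (norm x1 + norm x2) + (norm x3 + norm x4)" by (intro add_mono norm_Pair_le)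
  finally show ?thesis by simp
qed

lemma abs_le_norm_pt:
  "\<bar>x1\<bar> \<le> norm (((x1, x2), (x3, x4)) :: pt) \<and> \<bar>x2\<bar> \<le> norm (((x1, x2), (x3, x4)) :: pt) \<and>
   \<bar>x3\<bar> \<le> norm (((x1, x2), (x3, x4)) :: pt) \<and> \<bar>x4\<bar> \<le> norm (((x1, x2), (x3, x4)) :: pt)"
proof -
  have "norm (x1, x2) \<le> norm (((x1, x2), (x3, x4)) :: pt)" "norm (x3, x4) \<le> norm (((x1, x2), (x3, x4)) :: pt)"
    by (rule norm_fst_le, rule norm_snd_le)
  moreover have "norm x1 \<le> norm (x1, x2)" "norm x2 \<le> norm (x1, x2)"
    "norm x3 \<le> norm (x3, x4)" "norm x4 \<le> norm (x3, x4)"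
    by (rule norm_fst_le norm_snd_le)+
  ultimately show ?thesis by auto
qed

lemma abs_linear_recurrence_bound:
  fixes w :: "nat \<Rightarrow> real"
  assumes "0 \<le> b" "b \<le> R" "0 \<le> D" and step: "\<And>n. \<bar>w (Suc n)\<bar> \<le> D * R^Suc n + b * \<bar>w n\<bar>"
  shows "\<bar>w n\<bar> \<le> (\<bar>w 0\<bar> + real n * D) * R^n"
proof (induction n)
  case 0 then show ?case by simp
next
  case (Suc n)
  have "b * \<bar>w n\<bar> \<le> R * ((\<bar>w 0\<bar> + real n * D) * R^n)"
    using Suc assms by (intro mult_mono) auto
  with step[of n] show ?case by (simp add: algebra_simps)
qed

lemma tendsto_ln_div_rate:
  fixes N :: "nat \<Rightarrow> real"
  assumes "0 < c" "0 < r" "0 \<le> e"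
    and "eventually (\<lambda>n. c * r^n \<le> N n \<and> N n \<le> (d + real n * e) * r^n) sequentially"
  shows "(\<lambda>n. ln (N n) / real n) \<longlonglongrightarrow> ln r"
proof -
  define K where "K = max 1 (\<bar>d\<bar> + e)"
  have K: "0 < K" "d + real n * e \<le> K * (real n + 1)" for n
  proof -
    have "d \<le> K" "e \<le> K" using assms(3) by (auto simp: K_def le_max_iff_disj abs_if)
    moreover from this have "real n * e \<le> real n * K" by (intro mult_left_mono) auto
    ultimately show "0 < K" "d + real n * e \<le> K * (real n + 1)"
      by (auto simp: K_def algebra_simps)
  qed
  have lo: "(\<lambda>n::nat. (ln c + real n * ln r) / real n) \<longlonglongrightarrow> ln r" by real_asymp
  have hi: "(\<lambda>n::nat. (ln K + ln (real n + 1) + real n * ln r) / real n) \<longlonglongrightarrow> ln r" by real_asymp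
  show ?thesis
  proof (rule tendsto_sandwich[OF _ _ lo hi])
    have "(ln c + real n * ln r) / real n \<le> ln (N n) / real n \<and>
          ln (N n) / real n \<le> (ln K + ln (real n + 1) + real n * ln r) / real n"
      if N: "c * r^n \<le> N n" "N n \<le> (d + real n * e) * r^n" for n
    proof -
      have "(d + real n * e) * r^n \<le> K * (real n + 1) * r^n"
        using K(2)[of n] assms(2) by (intro mult_right_mono) auto
      moreover have "0 < c * r^n" using assms by simp
      ultimately have "ln (c * r^n) \<le> ln (N n)" "ln (N n) \<le> ln (K * (real n + 1) * r^n)"
        using N by (simp_all add: ln_le_cancel_iff)
      with K(1) assms show ?thesis by (simp add: ln_mult ln_realpow divide_right_mono)
    qed
    then show "eventually (\<lambda>n. (ln c + real n * ln r) / real n \<le> ln (N n) / real n) sequentially"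
      and "eventually (\<lambda>n. ln (N n) / real n \<le> (ln K + ln (real n + 1) + real n * ln r) / real n) sequentially"
      using assms(4) by (auto elim: eventually_mono)
  qed
qed

lemma has_lyap_spectrum_flag:
  fixes L P :: "pt set"
  assumes "subspace L" "subspace P" "L \<subseteq> P" "dim L = 1" "dim P = 2" "l1 \<le> l2" "l2 \<le> l3"
    and lim_L: "\<And>v. v \<in> L - {0} \<Longrightarrow> (\<lambda>n. ln (norm (tan_iter F DF n p v)) / real n) \<longlonglongrightarrow> l1"
    and lim_P: "\<And>v. v \<in> P - L \<Longrightarrow> (\<lambda>n. ln (norm (tan_iter F DF n p v)) / real n) \<longlonglongrightarrow> l2"
    and lim_out: "\<And>v. v \<notin> P \<Longrightarrow> (\<lambda>n. ln (norm (tan_iter F DF n p v)) / real n) \<longlonglongrightarrow> l3"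
  shows "has_lyap_spectrum F DF p {#l3, l3, l1, l2#}"
proof -
  have "0 \<in> L" using \<open>subspace L\<close> by (rule subspace_0)
  have lim: "(\<lambda>n. ln (norm (tan_iter F DF n p v)) / real n) \<longlonglongrightarrow>
      (if v \<in> L then l1 else if v \<in> P then l2 else l3)" if "v \<noteq> 0" for v
    using that lim_L lim_P lim_out \<open>L \<subseteq> P\<close> by auto
  have sublevel: "{v. v = 0 \<or> lyap F DF p v \<le> c} =
      (if l3 \<le> c then UNIV else if l2 \<le> c then P else if l1 \<le> c then L else {0})" for c
  proof (intro set_eqI)
    fix v :: pt
    have "v \<noteq> 0 \<Longrightarrow> lyap F DF p v = (if v \<in> L then l1 else if v \<in> P then l2 else l3)"
      unfolding lyap_def using lim by (rule limI)
    then show "v \<in> {v. v = 0 \<or> lyap F DF p v \<le> c} \<longleftrightarrow>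
        v \<in> (if l3 \<le> c then UNIV else if l2 \<le> c then P else if l1 \<le> c then L else {0})"
      using \<open>0 \<in> L\<close> \<open>L \<subseteq> P\<close> \<open>l1 \<le> l2\<close> \<open>l2 \<le> l3\<close> by (cases "v = 0") auto
  qed
  show ?thesis
    unfolding has_lyap_spectrum_def
  proof (intro conjI allI impI)
    fix v :: pt assume "v \<noteq> 0"
    show "convergent (\<lambda>n. ln (norm (tan_iter F DF n p v)) / real n)"
      using lim[OF \<open>v \<noteq> 0\<close>] by (rule convergentI)
  next
    fix c
    show "dim {v. v = 0 \<or> lyap F DF p v \<le> c} = size (filter_mset (\<lambda>l. l \<le> c) {#l3, l3, l1, l2#})"
      unfolding sublevel using assms(4-7) by auto
  qed
qed

lemma dim_plane_fst_zero: "dim {v :: pt. fst (fst v) = 0 \<and> fst (snd v) = 0} = 2"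
proof -
  let ?B = "{((0, 1), (0, 0)), ((0, 0), (0, 1))} :: pt set"
  have "span ?B = {x. \<exists>k. x - k *\<^sub>R ((0, 1), (0, 0)) \<in> range (\<lambda>j. j *\<^sub>R ((0, 0), (0, 1)))}"
    by (simp add: span_insert span_singleton image_iff)
  also have "\<dots> = {v :: pt. fst (fst v) = 0 \<and> fst (snd v) = 0}"
  proof (intro set_eqI iffI)
    fix x :: pt assume "x \<in> {x. \<exists>k. x - k *\<^sub>R ((0, 1), (0, 0)) \<in> range (\<lambda>j. j *\<^sub>R ((0, 0), (0, 1)))}"
    then obtain k j where "x - k *\<^sub>R ((0, 1), (0, 0)) = j *\<^sub>R ((0, 0), (0, 1))" by auto
    then have "x = k *\<^sub>R ((0, 1), (0, 0)) + j *\<^sub>R ((0, 0), (0, 1))" by (simp add: algebra_simps)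
    then show "x \<in> {v. fst (fst v) = 0 \<and> fst (snd v) = 0}" by simp
  next
    fix x :: pt assume "x \<in> {v. fst (fst v) = 0 \<and> fst (snd v) = 0}"
    then obtain u2 u4 where x: "x = ((0, u2), (0, u4))" by (metis (mono_tags, lifting) mem_Collect_eq prod.collapse)
    have "x - u2 *\<^sub>R ((0, 1), (0, 0)) = u4 *\<^sub>R ((0, 0), (0, 1))" by (simp add: x zero_prod_def)
    then show "x \<in> {x. \<exists>k. x - k *\<^sub>R ((0, 1), (0, 0)) \<in> range (\<lambda>j. j *\<^sub>R ((0, 0), (0, 1)))}" by blast
  qed
  finally have span_B: "span ?B = {v :: pt. fst (fst v) = 0 \<and> fst (snd v) = 0}" .
  have "independent ?B" by (auto simp: independent_insert span_singleton zero_prod_def)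
  then have "dim ?B = 2" by (simp add: dim_eq_card_independent)
  then show ?thesis by (simp flip: span_B add: dim_span)
qed

lemma dim_line:
  fixes e :: "'a :: euclidean_space"
  assumes "e \<noteq> 0"
  shows "dim (range (\<lambda>k. k *\<^sub>R e)) = 1"
proof -
  have "independent {e}" using assms by (simp add: independent_insert)
  then have "dim {e} = 1" by (simp add: dim_eq_card_independent)
  then show ?thesis by (simp flip: span_singleton add: dim_span)
qed

definition slow_term :: "(nat \<Rightarrow> real) \<Rightarrow> real \<Rightarrow> real \<Rightarrow> nat \<Rightarrow> real" where
  "slow_term H a b k = (a / b)^k * H k / b"

definition slow_slope :: "(nat \<Rightarrow> real) \<Rightarrow> real \<Rightarrow> real \<Rightarrow> real" where
  "slow_slope H a b = (\<Sum>k. slow_term H a b k)"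

definition slow_direction :: "(nat \<Rightarrow> real) \<Rightarrow> real \<Rightarrow> real \<Rightarrow> pt" where
  "slow_direction H a b = (if b \<le> a then ((0, 0), (0, 1)) else ((0, 1), (0, - slow_slope H a b)))"

locale bounded_skew_cocycle =
  fixes a b C :: real and G H :: "nat \<Rightarrow> real"
  assumes a_pos: "0 < a" and a_less_2: "a < 2" and b_pos: "0 < b" and b_less_2: "b < 2"
    and G_bound: "\<And>k. \<bar>G k\<bar> \<le> C" and H_bound: "\<And>k. \<bar>H k\<bar> \<le> C"
begin

lemma C_nonneg: "0 \<le> C"
  using G_bound[of 0] by linarith

lemma abs_fibre_seq_Suc_le:
  "\<bar>fibre_seq G H a b u1 u2 u4 (Suc k)\<bar>
     \<le> C * (2^k * \<bar>u1\<bar>) + C * (a^k * \<bar>u2\<bar>) + b * \<bar>fibre_seq G H a b u1 u2 u4 k\<bar>"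
proof -
  let ?w = "fibre_seq G H a b u1 u2 u4 k"
  have "\<bar>fibre_seq G H a b u1 u2 u4 (Suc k)\<bar>
      \<le> \<bar>G k * (2^k * u1)\<bar> + \<bar>H k * (a^k * u2)\<bar> + \<bar>b * ?w\<bar>"
    unfolding fibre_seq.simps by (rule order_trans[OF abs_triangle_ineq add_right_mono[OF abs_triangle_ineq]])
  moreover have "\<bar>G k * (2^k * u1)\<bar> \<le> C * (2^k * \<bar>u1\<bar>)" "\<bar>H k * (a^k * u2)\<bar> \<le> C * (a^k * \<bar>u2\<bar>)"
    using G_bound[of k] H_bound[of k] a_pos by (simp_all add: abs_mult mult_right_mono)
  moreover have "\<bar>b * ?w\<bar> = b * \<bar>?w\<bar>" using b_pos by (simp add: abs_mult)
  ultimately show ?thesis by linarith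
qed

lemma norm_skew_cocycle_le:
  "norm (skew_cocycle G H a b n ((u1, u2), (u3, u4)))
     \<le> 2^n * \<bar>u1\<bar> + a^n * \<bar>u2\<bar> + 2^n * \<bar>u3\<bar> + \<bar>fibre_seq G H a b u1 u2 u4 n\<bar>"
  using norm_pt_le_sum_abs[of "2^n * u1" "a^n * u2" "2^n * u3" "fibre_seq G H a b u1 u2 u4 n"] a_pos
  by (simp add: skew_cocycle_def abs_mult)

lemma norm_skew_cocycle_ge:
  "2^n * \<bar>u1\<bar> \<le> norm (skew_cocycle G H a b n ((u1, u2), (u3, u4))) \<and>
   a^n * \<bar>u2\<bar> \<le> norm (skew_cocycle G H a b n ((u1, u2), (u3, u4))) \<and>
   2^n * \<bar>u3\<bar> \<le> norm (skew_cocycle G H a b n ((u1, u2), (u3, u4))) \<and>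
   \<bar>fibre_seq G H a b u1 u2 u4 n\<bar> \<le> norm (skew_cocycle G H a b n ((u1, u2), (u3, u4)))"
  using abs_le_norm_pt[of "2^n * u1" "a^n * u2" "2^n * u3" "fibre_seq G H a b u1 u2 u4 n"] a_pos
  by (simp add: skew_cocycle_def abs_mult)

lemma tendsto_exponent_unstable:
  assumes "u1 \<noteq> 0 \<or> u3 \<noteq> 0"
  shows "(\<lambda>n. ln (norm (skew_cocycle G H a b n ((u1, u2), (u3, u4)))) / real n) \<longlonglongrightarrow> ln 2"
proof -
  define D where "D = C * (\<bar>u1\<bar> + \<bar>u2\<bar>)"
  have "0 \<le> D" using C_nonneg by (simp add: D_def)
  have a_le: "a^n \<le> 2^n" for n using a_pos a_less_2 by (intro power_mono) auto
  have W: "\<bar>fibre_seq G H a b u1 u2 u4 n\<bar> \<le> (\<bar>u4\<bar> + real n * D) * 2^n" for n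
  proof -
    have "\<bar>fibre_seq G H a b u1 u2 u4 n\<bar> \<le> (\<bar>fibre_seq G H a b u1 u2 u4 0\<bar> + real n * D) * 2^n"
    proof (rule abs_linear_recurrence_bound)
      fix k
    have "C * (a^k * \<bar>u2\<bar>) \<le> C * (2^k * \<bar>u2\<bar>)"
      using a_le C_nonneg by (intro mult_left_mono mult_right_mono) auto
    moreover have "C * (2^k * \<bar>u1\<bar>) + C * (2^k * \<bar>u2\<bar>) \<le> D * 2^Suc k"
      using C_nonneg by (simp add: D_def algebra_simps)
    ultimately show "\<bar>fibre_seq G H a b u1 u2 u4 (Suc k)\<bar> \<le> D * 2^Suc k + b * \<bar>fibre_seq G H a b u1 u2 u4 k\<bar>"
      using abs_fibre_seq_Suc_le[of u1 u2 u4 k] by linarith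
    qed (use b_pos b_less_2 \<open>0 \<le> D\<close> in auto)
    then show ?thesis by simp
  qed
  have "max \<bar>u1\<bar> \<bar>u3\<bar> * 2^n \<le> norm (skew_cocycle G H a b n ((u1, u2), (u3, u4))) \<and>
      norm (skew_cocycle G H a b n ((u1, u2), (u3, u4)))
        \<le> (\<bar>u1\<bar> + \<bar>u2\<bar> + \<bar>u3\<bar> + \<bar>u4\<bar> + real n * D) * 2^n" for n
  proof
    show "max \<bar>u1\<bar> \<bar>u3\<bar> * 2^n \<le> norm (skew_cocycle G H a b n ((u1, u2), (u3, u4)))"
      using norm_skew_cocycle_ge[of n u1 u2 u3 u4] by (simp add: max_def mult.commute)
    have "a^n * \<bar>u2\<bar> \<le> 2^n * \<bar>u2\<bar>" using a_le by (intro mult_right_mono) auto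
    moreover have "(\<bar>u1\<bar> + \<bar>u2\<bar> + \<bar>u3\<bar> + \<bar>u4\<bar> + real n * D) * 2^n
        = 2^n * \<bar>u1\<bar> + 2^n * \<bar>u2\<bar> + 2^n * \<bar>u3\<bar> + (\<bar>u4\<bar> + real n * D) * 2^n"
      by (simp add: algebra_simps)
    ultimately show "norm (skew_cocycle G H a b n ((u1, u2), (u3, u4)))
        \<le> (\<bar>u1\<bar> + \<bar>u2\<bar> + \<bar>u3\<bar> + \<bar>u4\<bar> + real n * D) * 2^n"
      using norm_skew_cocycle_le[of n u1 u2 u3 u4] W[of n] by linarith
  qed
  then show ?thesis
    using assms \<open>0 \<le> D\<close>
    by (intro tendsto_ln_div_rate[where c="max \<bar>u1\<bar> \<bar>u3\<bar>"] always_eventually allI) auto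
qed

lemma fibre_seq_vertical: "fibre_seq G H a b 0 0 u4 n = b^n * u4"
  by (induction n) simp_all

lemma tendsto_exponent_vertical:
  assumes "u4 \<noteq> 0"
  shows "(\<lambda>n. ln (norm (skew_cocycle G H a b n ((0, 0), (0, u4)))) / real n) \<longlonglongrightarrow> ln b"
proof -
  have "norm (skew_cocycle G H a b n ((0, 0), (0, u4))) = \<bar>u4\<bar> * b^n" for n
    using norm_skew_cocycle_le[of n 0 0 0 u4] norm_skew_cocycle_ge[of n 0 0 0 u4] b_pos
    by (simp add: fibre_seq_vertical abs_mult mult.commute)
  then show ?thesis
    using assms b_pos by (intro tendsto_ln_div_rate[where c="\<bar>u4\<bar>" and d="\<bar>u4\<bar>" and e=0]) auto
qed

lemma tendsto_exponent_plane_b_le_a: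
  assumes "b \<le> a" "u2 \<noteq> 0"
  shows "(\<lambda>n. ln (norm (skew_cocycle G H a b n ((0, u2), (0, u4)))) / real n) \<longlonglongrightarrow> ln a"
proof -
  define D where "D = C * \<bar>u2\<bar> / a"
  have "0 \<le> D" using C_nonneg a_pos by (simp add: D_def)
  have W: "\<bar>fibre_seq G H a b 0 u2 u4 n\<bar> \<le> (\<bar>u4\<bar> + real n * D) * a^n" for n
  proof -
    have "\<bar>fibre_seq G H a b 0 u2 u4 n\<bar> \<le> (\<bar>fibre_seq G H a b 0 u2 u4 0\<bar> + real n * D) * a^n"
    proof (rule abs_linear_recurrence_bound)
      fix k
      have "C * (a^k * \<bar>u2\<bar>) = D * a^Suc k" using a_pos by (simp add: D_def field_simps)
      moreover have "\<bar>fibre_seq G H a b 0 u2 u4 (Suc k)\<bar>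
          \<le> C * (a^k * \<bar>u2\<bar>) + b * \<bar>fibre_seq G H a b 0 u2 u4 k\<bar>"
        using abs_fibre_seq_Suc_le[of 0 u2 u4 k] by simp
      ultimately show "\<bar>fibre_seq G H a b 0 u2 u4 (Suc k)\<bar> \<le> D * a^Suc k + b * \<bar>fibre_seq G H a b 0 u2 u4 k\<bar>"
        by linarith
    qed (use b_pos assms(1) \<open>0 \<le> D\<close> in auto)
    then show ?thesis by simp
  qed
  have "\<bar>u2\<bar> * a^n \<le> norm (skew_cocycle G H a b n ((0, u2), (0, u4))) \<and>
      norm (skew_cocycle G H a b n ((0, u2), (0, u4))) \<le> (\<bar>u2\<bar> + \<bar>u4\<bar> + real n * D) * a^n" for n
    using norm_skew_cocycle_le[of n 0 u2 0 u4] norm_skew_cocycle_ge[of n 0 u2 0 u4] W[of n]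
    by (simp add: algebra_simps)
  then show ?thesis
    using assms a_pos \<open>0 \<le> D\<close> by (intro tendsto_ln_div_rate[where c="\<bar>u2\<bar>"] always_eventually allI) auto
qed

lemma fibre_seq_plane:
  "fibre_seq G H a b 0 u2 u4 n = b^n * (u4 + u2 * (\<Sum>k<n. slow_term H a b k))"
proof (induction n)
  case (Suc n)
  have "b^Suc n * slow_term H a b n = a^n * H n"
    using b_pos by (simp add: slow_term_def power_divide field_simps)
  with Suc show ?case by (simp add: algebra_simps)
qed simp

context
  assumes a_less_b: "a < b"
begin

lemma abs_slow_term_le: "\<bar>slow_term H a b k\<bar> \<le> C / b * (a / b)^k"
  using H_bound[of k] a_pos b_pos
  by (simp add: slow_term_def abs_mult divide_right_mono mult_left_mono mult.commute)

lemma summable_geometric_slow: "summable (\<lambda>k. C / b * (a / b)^k)"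
  using a_pos a_less_b by (intro summable_mult summable_geometric) auto

lemma suminf_geometric_slow: "(\<Sum>k. C / b * (a / b)^k) = C / (b - a)"
proof -
  have q: "norm (a / b) < 1" using a_pos a_less_b by simp
  have "(\<Sum>k. C / b * (a / b)^k) = C / b * (\<Sum>k. (a / b)^k)"
    by (rule suminf_mult[OF summable_geometric[OF q]])
  also have "\<dots> = C / b * (1 / (1 - a / b))"
    by (simp only: suminf_geometric[OF q])
  also have "\<dots> = C / (b - a)" using a_less_b b_pos by (simp add: field_simps)
  finally show ?thesis .
qed

lemma summable_slow_term: "summable (slow_term H a b)"
  by (rule summable_comparison_test'[OF summable_geometric_slow]) (use abs_slow_term_le in auto)

lemma abs_slow_tail_le: "\<bar>\<Sum>k. slow_term H a b (k + n)\<bar> \<le> C / (b - a) * (a / b)^n"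
proof -
  have le: "\<bar>slow_term H a b (k + n)\<bar> \<le> (a / b)^n * (C / b * (a / b)^k)" for k
    using abs_slow_term_le[of "k + n"] by (simp add: power_add mult_ac)
  have sg: "summable (\<lambda>k. (a / b)^n * (C / b * (a / b)^k))"
    by (intro summable_mult summable_geometric_slow)
  have sa: "summable (\<lambda>k. \<bar>slow_term H a b (k + n)\<bar>)"
    by (rule summable_comparison_test'[OF sg]) (use le in auto)
  have "\<bar>\<Sum>k. slow_term H a b (k + n)\<bar> \<le> (\<Sum>k. \<bar>slow_term H a b (k + n)\<bar>)"
    by (rule summable_rabs[OF sa])
  also have "\<dots> \<le> (\<Sum>k. (a / b)^n * (C / b * (a / b)^k))"
    by (rule suminf_le[OF le sa sg])
  also have "\<dots> = (a / b)^n * (\<Sum>k. C / b * (a / b)^k)"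
    by (rule suminf_mult[OF summable_geometric_slow])
  also have "\<dots> = C / (b - a) * (a / b)^n"
    by (simp only: suminf_geometric_slow mult.commute)
  finally show ?thesis .
qed

lemma abs_slow_partial_le: "\<bar>\<Sum>k<n. slow_term H a b k\<bar> \<le> C / (b - a)"
proof -
  have "\<bar>\<Sum>k<n. slow_term H a b k\<bar> \<le> (\<Sum>k<n. C / b * (a / b)^k)"
    by (rule order_trans[OF sum_abs sum_mono[OF abs_slow_term_le]])
  also have "\<dots> \<le> (\<Sum>k. C / b * (a / b)^k)"
    using C_nonneg a_pos b_pos by (intro sum_le_suminf summable_geometric_slow) auto
  finally show ?thesis by (simp only: suminf_geometric_slow)
qed

lemma tendsto_exponent_plane_generic:
  assumes "u4 + slow_slope H a b * u2 \<noteq> 0"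
  shows "(\<lambda>n. ln (norm (skew_cocycle G H a b n ((0, u2), (0, u4)))) / real n) \<longlonglongrightarrow> ln b"
proof -
  define z where "z = u4 + u2 * slow_slope H a b"
  have "(\<lambda>n. \<bar>u4 + u2 * (\<Sum>k<n. slow_term H a b k)\<bar>) \<longlonglongrightarrow> \<bar>z\<bar>"
    unfolding z_def slow_slope_def
    by (intro tendsto_rabs tendsto_add tendsto_const tendsto_mult summable_LIMSEQ summable_slow_term)
  then have ev: "eventually (\<lambda>n. \<bar>z\<bar> / 2 < \<bar>u4 + u2 * (\<Sum>k<n. slow_term H a b k)\<bar>) sequentially"
    using assms by (intro order_tendstoD(1)) (auto simp: z_def mult.commute)
  have bounds: "\<bar>z\<bar> / 2 * b^n \<le> norm (skew_cocycle G H a b n ((0, u2), (0, u4))) \<and>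
      norm (skew_cocycle G H a b n ((0, u2), (0, u4)))
        \<le> (\<bar>u2\<bar> + \<bar>u4\<bar> + \<bar>u2\<bar> * (C / (b - a)) + real n * 0) * b^n"
    if z: "\<bar>z\<bar> / 2 < \<bar>u4 + u2 * (\<Sum>k<n. slow_term H a b k)\<bar>" for n
  proof -
    let ?P = "\<Sum>k<n. slow_term H a b k"
    have W: "\<bar>fibre_seq G H a b 0 u2 u4 n\<bar> = b^n * \<bar>u4 + u2 * ?P\<bar>"
      using b_pos by (simp add: fibre_seq_plane abs_mult)
    have "\<bar>u2 * ?P\<bar> \<le> \<bar>u2\<bar> * (C / (b - a))"
      using abs_slow_partial_le[of n] unfolding abs_mult by (intro mult_left_mono) auto
    then have "\<bar>u4 + u2 * ?P\<bar> \<le> \<bar>u4\<bar> + \<bar>u2\<bar> * (C / (b - a))"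
      using abs_triangle_ineq[of u4 "u2 * ?P"] by linarith
    then have "\<bar>fibre_seq G H a b 0 u2 u4 n\<bar> \<le> b^n * (\<bar>u4\<bar> + \<bar>u2\<bar> * (C / (b - a)))"
      unfolding W using b_pos by (intro mult_left_mono) auto
    moreover have "a^n * \<bar>u2\<bar> \<le> b^n * \<bar>u2\<bar>"
      using a_pos a_less_b by (intro mult_right_mono power_mono) auto
    moreover have "\<bar>z\<bar> / 2 * b^n \<le> \<bar>fibre_seq G H a b 0 u2 u4 n\<bar>"
      unfolding W using z b_pos by (simp add: mult.commute)
    ultimately show ?thesis
      using norm_skew_cocycle_le[of n 0 u2 0 u4] norm_skew_cocycle_ge[of n 0 u2 0 u4]
      by (simp add: algebra_simps)
  qed
  have "0 < \<bar>z\<bar> / 2" using assms by (simp add: z_def mult.commute)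
  moreover note b_pos order_refl
  moreover have "eventually (\<lambda>n. \<bar>z\<bar> / 2 * b^n \<le> norm (skew_cocycle G H a b n ((0, u2), (0, u4))) \<and>
      norm (skew_cocycle G H a b n ((0, u2), (0, u4)))
        \<le> (\<bar>u2\<bar> + \<bar>u4\<bar> + \<bar>u2\<bar> * (C / (b - a)) + real n * 0) * b^n) sequentially"
    using ev by (rule eventually_mono) (rule bounds)
  ultimately show ?thesis by (rule tendsto_ln_div_rate)
qed

lemma tendsto_exponent_plane_slow:
  assumes "u2 \<noteq> 0" "u4 + slow_slope H a b * u2 = 0"
  shows "(\<lambda>n. ln (norm (skew_cocycle G H a b n ((0, u2), (0, u4)))) / real n) \<longlonglongrightarrow> ln a"
proof -
  have "\<bar>u2\<bar> * a^n \<le> norm (skew_cocycle G H a b n ((0, u2), (0, u4))) \<and>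
      norm (skew_cocycle G H a b n ((0, u2), (0, u4)))
        \<le> (\<bar>u2\<bar> + \<bar>u2\<bar> * (C / (b - a)) + real n * 0) * a^n" for n
  proof -
    let ?T = "\<Sum>k. slow_term H a b (k + n)"
    have partial: "(\<Sum>k<n. slow_term H a b k) = slow_slope H a b - ?T"
      using suminf_split_initial_segment[OF summable_slow_term, of n] by (simp add: slow_slope_def)
    have "u4 + u2 * (\<Sum>k<n. slow_term H a b k) = (u4 + slow_slope H a b * u2) - u2 * ?T"
      unfolding partial by (simp add: algebra_simps)
    then have "fibre_seq G H a b 0 u2 u4 n = - (b^n * u2 * ?T)"
      using assms(2) by (simp add: fibre_seq_plane)
    then have "\<bar>fibre_seq G H a b 0 u2 u4 n\<bar> = b^n * \<bar>u2\<bar> * \<bar>?T\<bar>"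
      using b_pos by (simp add: abs_mult)
    also have "\<dots> \<le> b^n * \<bar>u2\<bar> * (C / (b - a) * (a / b)^n)"
      using abs_slow_tail_le[of n] b_pos by (intro mult_left_mono) auto
    also have "\<dots> = \<bar>u2\<bar> * (C / (b - a)) * (b^n * (a / b)^n)"
      by (simp only: ac_simps)
    also have "\<dots> = \<bar>u2\<bar> * (C / (b - a)) * a^n"
      using b_pos by (simp add: power_divide)
    finally show ?thesis
      using norm_skew_cocycle_le[of n 0 u2 0 u4] norm_skew_cocycle_ge[of n 0 u2 0 u4]
      by (simp add: algebra_simps)
  qed
  then show ?thesis
    using assms a_pos by (intro tendsto_ln_div_rate[where c="\<bar>u2\<bar>" and e=0] always_eventually allI) auto
qed

end

lemma tendsto_exponent_slow_direction:
  assumes "k \<noteq> 0"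
  shows "(\<lambda>n. ln (norm (skew_cocycle G H a b n (k *\<^sub>R slow_direction H a b))) / real n)
    \<longlonglongrightarrow> min (ln a) (ln b)"
proof (cases "b \<le> a")
  case True
  then show ?thesis
    using tendsto_exponent_vertical[OF assms] a_pos b_pos by (simp add: slow_direction_def min_absorb2)
next
  case False
  then show ?thesis
    using tendsto_exponent_plane_slow[of k "- k * slow_slope H a b"] assms a_pos
    by (simp add: slow_direction_def min_absorb1)
qed

lemma tendsto_exponent_plane:
  assumes "((0, u2), (0, u4)) \<notin> range (\<lambda>k. k *\<^sub>R slow_direction H a b)"
  shows "(\<lambda>n. ln (norm (skew_cocycle G H a b n ((0, u2), (0, u4)))) / real n) \<longlonglongrightarrow> max (ln a) (ln b)"
proof (cases "b \<le> a")
  case True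
  have "((0, u2), (0, u4)) \<noteq> u4 *\<^sub>R slow_direction H a b" using assms by blast
  then have "u2 \<noteq> 0" using True by (auto simp: slow_direction_def)
  then show ?thesis
    using tendsto_exponent_plane_b_le_a[OF True] True b_pos by (simp add: max_absorb1)
next
  case False
  have "((0, u2), (0, u4)) \<noteq> u2 *\<^sub>R slow_direction H a b" using assms by blast
  then have "u4 + slow_slope H a b * u2 \<noteq> 0" using False by (auto simp: slow_direction_def algebra_simps)
  then show ?thesis
    using tendsto_exponent_plane_generic False a_pos by (simp add: max_absorb2)
qed

lemma has_lyap_spectrum_skew_cocycle:
  assumes tan: "\<And>n v. tan_iter F DF n p v = skew_cocycle G H a b n v"
  shows "has_lyap_spectrum F DF p {#ln 2, ln 2, ln a, ln b#}"
proof -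
  define P where "P = {v :: pt. fst (fst v) = 0 \<and> fst (snd v) = 0}"
  define L where "L = range (\<lambda>k. k *\<^sub>R slow_direction H a b)"
  have "subspace L" unfolding L_def by (metis span_singleton subspace_span)
  have "subspace P" by (auto simp: P_def subspace_def zero_prod_def)
  have "L \<subseteq> P" by (auto simp: L_def P_def slow_direction_def)
  have "has_lyap_spectrum F DF p {#ln 2, ln 2, min (ln a) (ln b), max (ln a) (ln b)#}"
  proof (rule has_lyap_spectrum_flag[OF \<open>subspace L\<close> \<open>subspace P\<close> \<open>L \<subseteq> P\<close>], unfold tan)
    show "dim L = 1" unfolding L_def by (rule dim_line) (simp add: slow_direction_def zero_prod_def)
    show "dim P = 2" unfolding P_def by (rule dim_plane_fst_zero)
    show "min (ln a) (ln b) \<le> max (ln a) (ln b)" "max (ln a) (ln b) \<le> ln 2"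
      using a_pos a_less_2 b_pos b_less_2 by auto
  next
    fix v assume "v \<in> L - {0}"
    then obtain k where "v = k *\<^sub>R slow_direction H a b" "k \<noteq> 0" by (auto simp: L_def)
    then show "(\<lambda>n. ln (norm (skew_cocycle G H a b n v)) / real n) \<longlonglongrightarrow> min (ln a) (ln b)"
      using tendsto_exponent_slow_direction by simp
  next
    fix v assume v: "v \<in> P - L"
    obtain u1 u2 u3 u4 where "v = ((u1, u2), (u3, u4))" by (metis prod.collapse)
    with v have "v = ((0, u2), (0, u4))" by (simp add: P_def)
    with v show "(\<lambda>n. ln (norm (skew_cocycle G H a b n v)) / real n) \<longlonglongrightarrow> max (ln a) (ln b)"
      using tendsto_exponent_plane by (simp add: L_def)
  next
    fix v assume "v \<notin> P"
    obtain u1 u2 u3 u4 where v: "v = ((u1, u2), (u3, u4))" by (metis prod.collapse)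
    with \<open>v \<notin> P\<close> have "u1 \<noteq> 0 \<or> u3 \<noteq> 0" by (simp add: P_def)
    then show "(\<lambda>n. ln (norm (skew_cocycle G H a b n v)) / real n) \<longlonglongrightarrow> ln 2"
      using tendsto_exponent_unstable by (simp add: v)
  qed
  moreover have "{#ln 2, ln 2, min (ln a) (ln b), max (ln a) (ln b)#} = {#ln 2, ln 2, ln a, ln b#}"
    by (cases "a \<le> b") (simp_all add: min_def max_def add_mset_commute[of "ln a" "ln b"])
  ultimately show ?thesis by simp
qed

end

lemma has_lyap_spectrum_Bg:
  assumes "0 < a" "a < 2" "0 < b" "b < 2" and "Cb1 g gx gy"
    and orbit: "\<And>k. (Bmap a ^^ k) (fst p) \<in> intM"
  shows "has_lyap_spectrum (Bg a b g) (DBg a b gx gy) p {#ln 2, ln 2, ln a, ln b#}"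
proof -
  obtain C where C: "\<And>q. q \<in> intM \<Longrightarrow> \<bar>gx q\<bar> \<le> C \<and> \<bar>gy q\<bar> \<le> C"
    using \<open>Cb1 g gx gy\<close> unfolding Cb1_def by blast
  interpret bounded_skew_cocycle a b C "\<lambda>k. gx ((Bmap a ^^ k) (fst p))" "\<lambda>k. gy ((Bmap a ^^ k) (fst p))"
    using assms C orbit by unfold_locales auto
  show ?thesis
    by (rule has_lyap_spectrum_skew_cocycle) (rule tan_iter_Bg_eq_skew_cocycle)
qed

definition dyadics :: "real set" where
  "dyadics = range (\<lambda>(k :: nat, m :: int). real_of_int m / 2^k)"

lemma dyadics_null: "dyadics \<in> null_sets lborel"
  unfolding dyadics_def by (intro countable_imp_null_set_lborel countable_image) simp

lemma fst_Bmap_iter: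
  assumes "0 \<le> x" "x < 1"
  shows "fst ((Bmap a ^^ k) (x, y)) \<in> {0..<1} \<and> (\<exists>m :: int. fst ((Bmap a ^^ k) (x, y)) = 2^k * x - m)"
proof (induction k)
  case 0 then show ?case using assms by (auto intro: exI[of _ 0])
next
  case (Suc k)
  define r where "r = fst ((Bmap a ^^ k) (x, y))"
  from Suc obtain m :: int where r: "r \<in> {0..<1}" "r = 2^k * x - m" by (auto simp: r_def)
  have step: "fst ((Bmap a ^^ Suc k) (x, y)) = (if r < 1/2 then 2 * r else 2 * r - 1)"
    by (cases "(Bmap a ^^ k) (x, y)") (simp add: Bmap_def r_def)
  show ?case
  proof (cases "r < 1/2")
    case True
    have "2 * r = 2^Suc k * x - of_int (2 * m)" using r by simp
    then show ?thesis using step True r by (auto intro!: exI[of _ "2 * m"])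
  next
    case False
    have "2 * r - 1 = 2^Suc k * x - of_int (2 * m + 1)" using r by simp
    then show ?thesis using step False r by (auto intro!: exI[of _ "2 * m + 1"])
  qed
qed

lemma Bmap_iter_in_intM:
  assumes "x \<in> {0..<1} - dyadics"
  shows "(Bmap a ^^ k) (x, y) \<in> intM"
proof -
  obtain m :: int where m: "fst ((Bmap a ^^ k) (x, y)) \<in> {0..<1}" "fst ((Bmap a ^^ k) (x, y)) = 2^k * x - m"
    using fst_Bmap_iter assms by fastforce
  have "fst ((Bmap a ^^ k) (x, y)) \<noteq> 0"
  proof
    assume "fst ((Bmap a ^^ k) (x, y)) = 0"
    then have "x = real_of_int m / 2^k" using m by (simp add: field_simps)
    then have "x \<in> dyadics" unfolding dyadics_def by (auto intro!: image_eqI[of _ _ "(k, m)"])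
    then show False using assms by simp
  qed
  with m show ?thesis by (cases "(Bmap a ^^ k) (x, y)") (auto simp: intM_def)
qed

lemma null_sets_lborel_Times_UNIV:
  fixes A :: "'a :: euclidean_space set"
  assumes "A \<in> null_sets lborel"
  shows "A \<times> (UNIV :: 'b :: euclidean_space set) \<in> null_sets lborel"
proof -
  have "emeasure (lborel \<Otimes>\<^sub>M lborel) (A \<times> (UNIV :: 'b set)) = 0"
    using assms by (subst lborel.emeasure_pair_measure_Times) auto
  then show ?thesis using assms by (simp add: null_sets_def flip: lborel_prod)
qed

lemma AE_lborel_fst_fst_notin:
  assumes "N \<in> null_sets lborel"
  shows "AE p in (lborel :: pt measure). fst (fst p) \<notin> N"
proof -
  have "(N \<times> UNIV) \<times> UNIV \<in> null_sets (lborel :: pt measure)"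
    by (intro null_sets_lborel_Times_UNIV assms)
  then show ?thesis by (rule AE_I') auto
qed

(* No measurability of f is needed, so h_g never has to be shown measurable. *)
lemma emeasure_distr_le:
  assumes "A \<in> sets N"
  shows "emeasure (distr M N f) A \<le> emeasure M (f -` A \<inter> space M)"
  using assms unfolding distr_def by (auto simp: emeasure_measure_of_conv sets.sigma_sets_eq)

lemma finite_measure_cantor_measure: "finite_measure (cantor_measure a)"
proof (rule finite_measureI)
  let ?P = "\<Pi>\<^sub>M i\<in>(UNIV :: nat set). measure_pmf (bernoulli_pmf (1/2))"
  interpret P: prob_space ?P by (intro prob_space_PiM prob_space_measure_pmf)
  have "emeasure (cantor_measure a) (space (cantor_measure a)) \<le> emeasure ?P (space ?P)"
    unfolding cantor_measure_def by (rule order_trans[OF emeasure_distr_le]) auto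
  then show "emeasure (cantor_measure a) (space (cantor_measure a)) \<noteq> \<infinity>"
    using P.emeasure_space_1 by (auto simp: top_unique)
qed

lemma finite_measure_leb01: "finite_measure leb01"
proof (rule finite_measureI)
  have "emeasure leb01 (space leb01) = emeasure lborel {0..<1 :: real}"
    unfolding leb01_def by (subst emeasure_restrict_space) (auto simp: space_restrict_space)
  then show "emeasure leb01 (space leb01) \<noteq> \<infinity>" by simp
qed

lemma AE_mu_g_fst_fst:
  assumes N: "N \<in> null_sets lborel"
  shows "AE p in mu_g a b g. fst (fst p) \<in> {0..<1} - N"
proof -
  define X where "X = {p :: pt. fst (fst p) \<in> N \<union> - {0..<1}}"
  define Q where "Q = (leb01 \<Otimes>\<^sub>M cantor_measure a) \<Otimes>\<^sub>M (leb01 \<Otimes>\<^sub>M cantor_measure b)"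
  interpret Ca: finite_measure "cantor_measure a" by (rule finite_measure_cantor_measure)
  interpret Q2: finite_measure "leb01 \<Otimes>\<^sub>M cantor_measure b"
    by (intro finite_measure_pair_measure finite_measure_cantor_measure finite_measure_leb01)
  have N_borel: "N \<in> sets borel" using null_setsD2[OF N] by simp
  have "(\<lambda>p :: pt. fst (fst p)) \<in> borel_measurable lborel"
    by (simp, intro borel_measurable_continuous_onI continuous_intros)
  moreover have "N \<union> - {0..<1} \<in> sets borel" using N_borel by auto
  moreover have "X = (\<lambda>p :: pt. fst (fst p)) -` (N \<union> - {0..<1}) \<inter> space lborel"
    by (auto simp: X_def)
  ultimately have X_sets: "X \<in> sets lborel" by (metis measurable_sets)
  have "space Q = ({0..<1} \<times> UNIV) \<times> ({0..<1} \<times> UNIV)"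
    by (simp add: Q_def space_pair_measure leb01_def space_restrict_space cantor_measure_def)
  moreover have "fst (fst (hg a b g q)) = fst (fst q)" for q
    by (cases q) (auto simp: hg_def split: prod.splits)
  ultimately have preimage: "hg a b g -` X \<inter> space Q = ((N \<inter> {0..<1}) \<times> UNIV) \<times> ({0..<1} \<times> UNIV)"
    by (auto simp: X_def)
  have N01: "N \<inter> {0..<1} \<in> sets leb01" "{0..<1 :: real} \<in> sets leb01"
    using N_borel by (simp_all add: leb01_def sets_restrict_space_iff)
  have UNIV_sets: "UNIV \<in> sets (cantor_measure c)" for c by (simp add: cantor_measure_def)
  have "emeasure leb01 (N \<inter> {0..<1}) = emeasure lborel (N \<inter> {0..<1})"
    unfolding leb01_def by (subst emeasure_restrict_space) auto
  also have "\<dots> = 0"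
    by (rule null_setsD1, rule null_sets_subset[OF N]) (use N_borel in auto)
  finally have null01: "emeasure leb01 (N \<inter> {0..<1}) = 0" .
  have "emeasure Q (((N \<inter> {0..<1}) \<times> UNIV) \<times> ({0..<1} \<times> UNIV))
      = emeasure (leb01 \<Otimes>\<^sub>M cantor_measure a) ((N \<inter> {0..<1}) \<times> UNIV)
        * emeasure (leb01 \<Otimes>\<^sub>M cantor_measure b) ({0..<1} \<times> UNIV)"
    unfolding Q_def using N01 UNIV_sets by (intro Q2.emeasure_pair_measure_Times) auto
  also have "emeasure (leb01 \<Otimes>\<^sub>M cantor_measure a) ((N \<inter> {0..<1}) \<times> UNIV)
      = emeasure leb01 (N \<inter> {0..<1}) * emeasure (cantor_measure a) UNIV"
    using N01 UNIV_sets by (intro Ca.emeasure_pair_measure_Times) auto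
  finally have "emeasure Q (hg a b g -` X \<inter> space Q) = 0"
    unfolding preimage null01 by simp
  moreover have "emeasure (mu_g a b g) X \<le> emeasure Q (hg a b g -` X \<inter> space Q)"
    unfolding mu_g_def Q_def by (rule emeasure_distr_le[OF X_sets])
  ultimately have "X \<in> null_sets (mu_g a b g)"
    using X_sets by (simp add: null_sets_def mu_g_def)
  then show ?thesis by (rule AE_I') (auto simp: X_def)
qed

theorem lemma3p6:
  fixes \<alpha> \<beta> :: real and g gx gy :: "real \<times> real \<Rightarrow> real"
  assumes "0 < \<alpha>" "\<alpha> < 1/2" "0 < \<beta>" "\<beta> < 1/2"
    and "Cb1 g gx gy"
  shows "(AE p in lborel. p \<in> MM \<longrightarrow>
            has_lyap_spectrum (Bg \<alpha> \<beta> g) (DBg \<alpha> \<beta> gx gy) p {#ln 2, ln 2, ln \<alpha>, ln \<beta>#})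
       \<and> (AE p in mu_g \<alpha> \<beta> g.
            has_lyap_spectrum (Bg \<alpha> \<beta> g) (DBg \<alpha> \<beta> gx gy) p {#ln 2, ln 2, ln \<alpha>, ln \<beta>#})"
proof -
  have spectrum: "has_lyap_spectrum (Bg \<alpha> \<beta> g) (DBg \<alpha> \<beta> gx gy) p {#ln 2, ln 2, ln \<alpha>, ln \<beta>#}"
    if "fst (fst p) \<in> {0..<1} - dyadics" for p :: pt
    using assms that Bmap_iter_in_intM[where x="fst (fst p)" and y="snd (fst p)"]
    by (intro has_lyap_spectrum_Bg) auto
  have "AE p in lborel. p \<in> MM \<longrightarrow> fst (fst p) \<in> {0..<1} - dyadics"
    using AE_lborel_fst_fst_notin[OF dyadics_null] by (rule eventually_mono) (auto simp: MM_def)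
  moreover have "AE p in mu_g \<alpha> \<beta> g. fst (fst p) \<in> {0..<1} - dyadics"
    by (rule AE_mu_g_fst_fst[OF dyadics_null])
  ultimately show ?thesis
    by (intro conjI; elim eventually_mono) (use spectrum in blast)+
qed

end
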